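(* For all finite strings $s,s'$ over the alphabet $\{\blacktriangledown,\blacktriangle,\triangleleft,\triangleright\}$, if $s$ is a subword of $s'$, then $b(s)\le b(s')$.
   Context: Consider finite strings over the alphabet $\{\blacktriangledown,\blacktriangle,\triangleleft,\triangleright\}$. The allowed replacements (each replaces a contiguous substring equal to its left-hand side by its right-hand side) are: $\triangleleft\blacktriangle\to\triangleleft$, $\triangleleft\blacktriangledown\to\triangleleft$, $\blacktriangle\triangleright\to\triangleright$, $\blacktriangledown\triangleright\to\triangleright$, $\blacktriangle\blacktriangle\to\blacktriangle$, $\blacktriangledown\blacktriangledown\to\blacktriangledown$, $\blacktriangledown\blacktriangle\to\blacktriangle\blacktriangledown$, $\blacktriangle\blacktriangledown\to\blacktriangledown\blacktriangle$, and $\triangleleft\triangleright\to\emptyset$ (the empty string). A rewriting $s\Rightarrow t$ is the simultaneous application to $s$ of several allowed replacements whose left-hand sides occupy pairwise disjoint contiguous substrings of $s$, producing $t$. A rewriting sequence of length $\ell$ from $s$ is a sequence $s=s_0\Rightarrow s_1\Rightarrow\cdots\Rightarrow s_\ell=\emptyset$. $b(s)$ denotes the length of a shortest rewriting sequence from $s$ (taken as $+\infty$ if none exists). A string $s$ is a subword of $s'$ if $s$ can be obtained from $s'$ by deleting some occurrences of the symbols $\blacktriangledown,\blacktriangle$ without changing the order of the remaining symbols. *)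

theory Defs
  imports Main "HOL-Library.Extended_Nat"
begin

text \<open>Alphabet: Down = black down-triangle, Up = black up-triangle,
  Lt = left-pointing triangle, Rt = right-pointing triangle.\<close>
datatype sym = Down | Up | Lt | Rt

inductive rule :: "sym list \<Rightarrow> sym list \<Rightarrow> bool" where
  "rule [Lt, Up] [Lt]"
| "rule [Lt, Down] [Lt]"
| "rule [Up, Rt] [Rt]"
| "rule [Down, Rt] [Rt]"
| "rule [Up, Up] [Up]"
| "rule [Down, Down] [Down]"
| "rule [Down, Up] [Up, Down]"
| "rule [Up, Down] [Down, Up]"
| "rule [Lt, Rt] []"

text \<open>One rewriting: simultaneous application of replacements at pairwise
  disjoint positions (s is split into segments, each either an untouched
  symbol or a left-hand side which is replaced by its right-hand side).\<close>
inductive rewrite :: "sym list \<Rightarrow> sym list \<Rightarrow> bool" where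
  rw_nil: "rewrite [] []"
| rw_keep: "rewrite s t \<Longrightarrow> rewrite (a # s) (a # t)"
| rw_rule: "rule l r \<Longrightarrow> rewrite s t \<Longrightarrow> rewrite (l @ s) (r @ t)"

definition b :: "sym list \<Rightarrow> enat" where
  "b s = (if \<exists>n. (rewrite ^^ n) s [] then enat (LEAST n. (rewrite ^^ n) s []) else \<infinity>)"

inductive subword :: "sym list \<Rightarrow> sym list \<Rightarrow> bool" where
  sw_nil: "subword [] []"
| sw_keep: "subword s s' \<Longrightarrow> subword (a # s) (a # s')"
| sw_del: "a \<in> {Up, Down} \<Longrightarrow> subword s s' \<Longrightarrow> subword s (a # s')"

end

(* Deleting black triangles commutes with rewriting: if s is a subword of s' and s' => t',
   then s => t for some subword t of t'. A replacement of s' whose left-hand side survives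
   intact in s is performed in s as well; if a black triangle of its left-hand side was
   deleted, what remains is already a subword of the right-hand side, and the replacement
   is dropped. Iterating, a rewriting sequence of length n from s' to the empty string
   yields one of the same length from s. *)

theory Submission imports Defs begin

lemma rewrite_refl: "rewrite s s"
  by (induction s) (auto intro: rewrite.intros)

lemma rewrite_append: "rewrite u v \<Longrightarrow> rewrite s t \<Longrightarrow> rewrite (u @ s) (v @ t)"
  by (induction rule: rewrite.induct) (auto intro: rewrite.intros)

lemma rule_imp_rewrite: "rule l r \<Longrightarrow> rewrite l r"
  using rw_rule[OF _ rw_nil] by fastforce

lemma subword_refl: "subword s s"
  by (induction s) (auto intro: subword.intros)

lemma subword_append: "subword u v \<Longrightarrow> subword s t \<Longrightarrow> subword (u @ s) (v @ t)"
  by (induction rule: subword.induct) (auto intro: subword.intros)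

lemma subword_Nil_right: "subword s [] \<longleftrightarrow> s = []"
  by (auto elim: subword.cases intro: subword.intros)

lemma subword_Cons_right:
  "subword s (a # t) \<longleftrightarrow> (\<exists>s'. s = a # s' \<and> subword s' t) \<or> (a \<in> {Up, Down} \<and> subword s t)"
  by (auto elim: subword.cases intro: subword.intros)

lemma subword_append_right_split:
  "subword s (xs @ ys) \<Longrightarrow> \<exists>u v. s = u @ v \<and> subword u xs \<and> subword v ys"
proof (induction xs arbitrary: s)
  case Nil
  then show ?case using subword_Nil_right by fastforce
next
  case (Cons x xs)
  then consider (keep) s' where "s = x # s'" "subword s' (xs @ ys)"
    | (del) "x \<in> {Up, Down}" "subword s (xs @ ys)"
    by (auto simp: subword_Cons_right)
  then show ?case
  proof cases
    case keep
    then show ?thesis using Cons.IH[of s'] by (metis append_Cons subword.sw_keep)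
  next
    case del
    then show ?thesis using Cons.IH[of s] by (metis subword.sw_del)
  qed
qed

lemma rule_subword_lhs: "rule l r \<Longrightarrow> subword u l \<Longrightarrow> u = l \<or> subword u r"
  by (induction rule: rule.induct)
     (auto simp: subword_Cons_right subword_Nil_right intro: subword.intros)

lemma rewrite_subword_simulation:
  "rewrite s' t' \<Longrightarrow> subword s s' \<Longrightarrow> \<exists>t. rewrite s t \<and> subword t t'"
proof (induction arbitrary: s rule: rewrite.induct)
  case rw_nil
  then have "s = []" by (simp add: subword_Nil_right)
  then show ?case using rewrite.rw_nil subword.sw_nil by blast
next
  case (rw_keep s' t' a)
  from rw_keep.prems consider (keep) s0 where "s = a # s0" "subword s0 s'"
    | (del) "a \<in> {Up, Down}" "subword s s'"
    by (auto simp: subword_Cons_right)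
  then show ?case
  proof cases
    case keep
    then show ?thesis using rw_keep.IH[of s0] by (blast intro: rewrite.rw_keep subword.sw_keep)
  next
    case del
    then show ?thesis using rw_keep.IH[of s] by (blast intro: subword.sw_del)
  qed
next
  case (rw_rule l r s' t')
  obtain u v where uv: "s = u @ v" "subword u l" "subword v s'"
    using subword_append_right_split[OF rw_rule.prems] by blast
  obtain w where w: "rewrite u w" "subword w r"
  proof (cases "u = l")
    case True
    then show ?thesis using that rule_imp_rewrite[OF rw_rule.hyps(1)] subword_refl by blast
  next
    case False
    then show ?thesis using that rule_subword_lhs[OF rw_rule.hyps(1) uv(2)] rewrite_refl by blast
  qed
  obtain t where t: "rewrite v t" "subword t t'"
    using rw_rule.IH[OF uv(3)] by blast
  have "rewrite s (w @ t)" using uv(1) w(1) t(1) by (simp add: rewrite_append)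
  moreover have "subword (w @ t) (r @ t')" using w(2) t(2) by (rule subword_append)
  ultimately show ?case by blast
qed

lemma relpowp_simulation:
  assumes sim: "\<And>x y x'. R x y \<Longrightarrow> S x' x \<Longrightarrow> \<exists>y'. R x' y' \<and> S y' y"
  shows "(R ^^ n) x y \<Longrightarrow> S x' x \<Longrightarrow> \<exists>y'. (R ^^ n) x' y' \<and> S y' y"
proof (induction n arbitrary: x x')
  case 0
  then show ?case by auto
next
  case (Suc n)
  obtain z where "R x z" "(R ^^ n) z y"
    using relpowp_Suc_D2[OF Suc.prems(1)] by blast
  with sim[of x z x'] Suc.prems(2) Suc.IH show ?case
    by (meson relpowp_Suc_I2)
qed

lemma b_le: "(rewrite ^^ n) s [] \<Longrightarrow> b s \<le> enat n"
  unfolding b_def by (auto intro: Least_le)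

lemma b_enatD: "b s = enat n \<Longrightarrow> (rewrite ^^ n) s []"
  unfolding b_def by (auto split: if_splits intro: LeastI_ex)

theorem theorem4:
  fixes s s' :: "sym list"
  assumes "subword s s'"
  shows "b s \<le> b s'"
proof (cases "b s'")
  case (enat n)
  then have "(rewrite ^^ n) s' []" by (rule b_enatD)
  then obtain t where "(rewrite ^^ n) s t" "subword t []"
    using relpowp_simulation[where R = rewrite and S = subword] rewrite_subword_simulation assms
    by metis
  then have "(rewrite ^^ n) s []" by (simp add: subword_Nil_right)
  then show ?thesis using enat by (simp add: b_le)
next
  case infinity
  then show ?thesis by simp
qed

end
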